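(* Let $\nu>0$, $\epsilon\in\{0,1\}$, and $\lambda\neq0$ real. For every smooth solution $U(X,T)$ of $$-2\nu^2U_XU_{XX}+3\epsilon U_XU-\nu^2U_{XXX}U+\tfrac23U_{XXX}-\tfrac23\nu^{5/2}U_{XXX}+\epsilon U_T-\nu^2U_{XXT}=0,\qquad(E_{\nu,\epsilon})$$ the system $$\hat\gamma_X=-\frac{\hat\gamma^2}{2\lambda}-\frac{\epsilon U}{\nu^2}+\frac{\lambda\epsilon}{2\nu^2}+\frac{\epsilon}{3\nu^{3/2}}+U_{XX}-\frac{\epsilon}{3\nu^4},$$ $$\hat\gamma_T=\Big(\frac{U}{2\lambda}-\frac{1}{3\nu^2\lambda}+\frac12+\frac{\sqrt\nu}{3\lambda}\Big)\hat\gamma^2-U_X\hat\gamma-\tfrac23\sqrt\nu\,U_{XX}-\frac{2\epsilon}{9\nu^6}-U_{XX}U+\frac{\epsilon U^2}{\nu^2}-\frac{2\lambda\epsilon}{3\nu^{3/2}}+\frac{2\lambda\epsilon}{3\nu^4}+\frac{\lambda\epsilon U}{2\nu^2}-\frac{\lambda^2\epsilon}{2\nu^2}-\frac{2\epsilon}{9\nu}-\frac{\epsilon U}{3\nu^4}+\frac{4\epsilon}{9\nu^{7/2}}+\frac{\epsilon U}{3\nu^{3/2}}+\frac{2U_{XX}}{3\nu^2}$$ for $\hat\gamma(X,T)$ is completely integrable; that is, $\hat\gamma$ is a quadratic pseudo-potential of $(E_{\nu,\epsilon})$.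
   Context: A real function $\Gamma$ is a pseudo-potential of an equation if there are smooth functions $f,g$ of $\Gamma$, the independent variables, $U$ and finitely many derivatives of $U$ such that $\Omega_\Gamma=d\Gamma-(f\,dX+g\,dT)$ satisfies $d\Omega_\Gamma\equiv0\bmod\Omega_\Gamma$ on every solution (equivalently, $\Gamma_X=f$, $\Gamma_T=g$ is compatible on solutions); it is quadratic if $f,g$ are polynomials of degree at most two in $\Gamma$. *)

theory Defs
  imports "HOL-Analysis.Analysis"
begin

definition pX :: "(real \<times> real \<Rightarrow> real) \<Rightarrow> real \<times> real \<Rightarrow> real" where
  "pX F = (\<lambda>p. deriv (\<lambda>s. F (s, snd p)) (fst p))"

definition pT :: "(real \<times> real \<Rightarrow> real) \<Rightarrow> real \<times> real \<Rightarrow> real" where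
  "pT F = (\<lambda>p. deriv (\<lambda>s. F (fst p, s)) (snd p))"

text \<open>Smooth (C-infinity) functions of two real variables: differentiable everywhere,
  and both partial derivatives are again smooth.\<close>

coinductive smooth2 :: "(real \<times> real \<Rightarrow> real) \<Rightarrow> bool" where
  "(\<forall>p. F differentiable (at p)) \<Longrightarrow> smooth2 (pX F) \<Longrightarrow> smooth2 (pT F) \<Longrightarrow> smooth2 F"

definition solves_E :: "real \<Rightarrow> real \<Rightarrow> (real \<times> real \<Rightarrow> real) \<Rightarrow> bool" where
  "solves_E nu eps U \<longleftrightarrow> (\<forall>p.
     - 2 * nu^2 * pX U p * pX (pX U) p + 3 * eps * pX U p * U p
     - nu^2 * pX (pX (pX U)) p * U p + 2/3 * pX (pX (pX U)) p
     - 2/3 * nu powr (5/2) * pX (pX (pX U)) p + eps * pT U p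
     - nu^2 * pT (pX (pX U)) p = 0)"

definition fhat :: "real \<Rightarrow> real \<Rightarrow> real \<Rightarrow> (real \<times> real \<Rightarrow> real) \<Rightarrow> real \<Rightarrow> real \<times> real \<Rightarrow> real" where
  "fhat nu eps lam U gam p =
     - (gam^2) / (2 * lam) - eps * U p / nu^2 + lam * eps / (2 * nu^2)
     + eps / (3 * nu powr (3/2)) + pX (pX U) p - eps / (3 * nu^4)"

definition ghat :: "real \<Rightarrow> real \<Rightarrow> real \<Rightarrow> (real \<times> real \<Rightarrow> real) \<Rightarrow> real \<Rightarrow> real \<times> real \<Rightarrow> real" where
  "ghat nu eps lam U gam p =
     (U p / (2 * lam) - 1 / (3 * nu^2 * lam) + 1/2 + sqrt nu / (3 * lam)) * gam^2
     - pX U p * gam - 2/3 * sqrt nu * pX (pX U) p - 2 * eps / (9 * nu^6)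
     - pX (pX U) p * U p + eps * (U p)^2 / nu^2
     - 2 * lam * eps / (3 * nu powr (3/2)) + 2 * lam * eps / (3 * nu^4)
     + lam * eps * U p / (2 * nu^2) - lam^2 * eps / (2 * nu^2)
     - 2 * eps / (9 * nu) - eps * U p / (3 * nu^4)
     + 4 * eps / (9 * nu powr (7/2)) + eps * U p / (3 * nu powr (3/2))
     + 2 * pX (pX U) p / (3 * nu^2)"

text \<open>Frobenius compatibility of Gamma_X = f, Gamma_T = g: with
  Omega = dGamma - f dX - g dT, dOmega = 0 mod Omega  iff
  f_T + f_Gamma g = g_X + g_Gamma f identically in (Gamma, X, T).\<close>

definition compatible_system ::
  "(real \<Rightarrow> real \<times> real \<Rightarrow> real) \<Rightarrow> (real \<Rightarrow> real \<times> real \<Rightarrow> real) \<Rightarrow> bool" where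
  "compatible_system f g \<longleftrightarrow> (\<forall>gam x t.
     deriv (\<lambda>s. f gam (x, s)) t + deriv (\<lambda>c. f c (x, t)) gam * g gam (x, t)
   = deriv (\<lambda>s. g gam (s, t)) x + deriv (\<lambda>c. g c (x, t)) gam * f gam (x, t))"

end

theory Submission
  imports Defs
begin

text \<open>The powers of \<open>\<Gamma>\<close> cancel identically, and what remains is
  \<open>-1/\<nu>\<^sup>2\<close> times the left-hand side of \<open>(E\<^sub>\<nu>\<^sub>,\<^sub>\<epsilon>)\<close>, which vanishes on solutions.
  This identity holds for every real \<open>\<epsilon>\<close>.\<close>

lemma smooth2_differentiable: "smooth2 F \<Longrightarrow> F differentiable (at p)"
  by (cases p) (auto elim: smooth2.cases)

lemma smooth2_pX: "smooth2 F \<Longrightarrow> smooth2 (pX F)"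
  by (erule smooth2.cases) simp

lemma has_real_derivative_pX:
  assumes "F differentiable (at (x, t))"
  shows "((\<lambda>s. F (s, t)) has_real_derivative pX F (x, t)) (at x)"
proof -
  have "((\<lambda>p. F p) \<circ> (\<lambda>s. (s, t))) differentiable (at x)"
    using assms by (intro differentiable_chain_at derivative_intros) simp
  then show ?thesis
    unfolding pX_def by (simp add: o_def DERIV_deriv_iff_real_differentiable)
qed

lemma has_real_derivative_pT:
  assumes "F differentiable (at (x, t))"
  shows "((\<lambda>s. F (x, s)) has_real_derivative pT F (x, t)) (at t)"
proof -
  have "((\<lambda>p. F p) \<circ> (\<lambda>s. (x, s))) differentiable (at t)"
    using assms by (intro differentiable_chain_at derivative_intros) simp
  then show ?thesis
    unfolding pT_def by (simp add: o_def DERIV_deriv_iff_real_differentiable)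
qed

lemma powr_nat_add_half:
  assumes "x > (0::real)"
  shows "x powr (real n + 1/2) = x ^ n * sqrt x"
  using assms by (simp add: powr_add powr_realpow powr_half_sqrt)

lemma deriv_fhat_T:
  assumes "smooth2 U" and "nu \<noteq> 0"
  shows "deriv (\<lambda>s. fhat nu eps lam U gam (x, s)) t
    = - eps * pT U (x, t) / nu^2 + pT (pX (pX U)) (x, t)"
  unfolding fhat_def
  using assms
  by (intro DERIV_imp_deriv)
    (auto intro!: derivative_eq_intros has_real_derivative_pT smooth2_differentiable smooth2_pX
      simp: field_simps)

lemma deriv_fhat_gamma:
  assumes "lam \<noteq> 0"
  shows "deriv (\<lambda>c. fhat nu eps lam U c p) gam = - gam / lam"
  unfolding fhat_def
  using assms by (intro DERIV_imp_deriv) (auto intro!: derivative_eq_intros simp: field_simps)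

lemma deriv_ghat_X:
  assumes "smooth2 U" and "nu \<noteq> 0" and "lam \<noteq> 0"
  shows "deriv (\<lambda>s. ghat nu eps lam U gam (s, t)) x
    = pX U (x, t) / (2 * lam) * gam^2 - pX (pX U) (x, t) * gam
      - 2/3 * sqrt nu * pX (pX (pX U)) (x, t) - pX (pX (pX U)) (x, t) * U (x, t)
      - pX (pX U) (x, t) * pX U (x, t) + 2 * eps * U (x, t) * pX U (x, t) / nu^2
      + lam * eps * pX U (x, t) / (2 * nu^2) - eps * pX U (x, t) / (3 * nu^4)
      + eps * pX U (x, t) / (3 * nu powr (3/2)) + 2 * pX (pX (pX U)) (x, t) / (3 * nu^2)"
  unfolding ghat_def
  using assms
  by (intro DERIV_imp_deriv)
    (auto intro!: derivative_eq_intros has_real_derivative_pX smooth2_differentiable smooth2_pX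
      simp: power_eq_if ac_simps)

lemma deriv_ghat_gamma:
  assumes "nu \<noteq> 0" and "lam \<noteq> 0"
  shows "deriv (\<lambda>c. ghat nu eps lam U c p) gam
    = 2 * (U p / (2 * lam) - 1 / (3 * nu^2 * lam) + 1/2 + sqrt nu / (3 * lam)) * gam - pX U p"
  unfolding ghat_def
  using assms by (intro DERIV_imp_deriv) (auto intro!: derivative_eq_intros simp: field_simps)

text \<open>Here \<open>r\<close> stands for \<open>\<surd>\<nu>\<close>; the identity fails if \<open>r\<close> and \<open>\<nu>\<close> are independent.\<close>

lemma compatibility_defect_eq:
  fixes nu r lam eps gam u ux uxx uxxx ut uxxt :: real
  assumes "r \<noteq> 0" and "nu = r^2" and "lam \<noteq> 0"
  shows "(- eps * ut / nu^2 + uxxt) + (- gam / lam) *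
      ((u / (2 * lam) - 1 / (3 * nu^2 * lam) + 1/2 + r / (3 * lam)) * gam^2
      - ux * gam - 2/3 * r * uxx - 2 * eps / (9 * nu^6)
      - uxx * u + eps * u^2 / nu^2
      - 2 * lam * eps / (3 * (nu * r)) + 2 * lam * eps / (3 * nu^4)
      + lam * eps * u / (2 * nu^2) - lam^2 * eps / (2 * nu^2)
      - 2 * eps / (9 * nu) - eps * u / (3 * nu^4)
      + 4 * eps / (9 * (nu^3 * r)) + eps * u / (3 * (nu * r))
      + 2 * uxx / (3 * nu^2))
    - ((ux / (2 * lam) * gam^2 - uxx * gam - 2/3 * r * uxxx - uxxx * u - uxx * ux
      + 2 * eps * u * ux / nu^2 + lam * eps * ux / (2 * nu^2) - eps * ux / (3 * nu^4)
      + eps * ux / (3 * (nu * r)) + 2 * uxxx / (3 * nu^2))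
    + (2 * (u / (2 * lam) - 1 / (3 * nu^2 * lam) + 1/2 + r / (3 * lam)) * gam - ux) *
      (- (gam^2) / (2 * lam) - eps * u / nu^2 + lam * eps / (2 * nu^2)
      + eps / (3 * (nu * r)) + uxx - eps / (3 * nu^4)))
    = - (- 2 * nu^2 * ux * uxx + 3 * eps * ux * u - nu^2 * uxxx * u + 2/3 * uxxx
      - 2/3 * (nu^2 * r) * uxxx + eps * ut - nu^2 * uxxt) / nu^2"
proof -
  have "lam * inverse lam = 1" "r * inverse r = 1"
    using assms by simp_all
  \<comment> \<open>with divisions written as inverses, \<open>algebra\<close> decides the identity modulo these relations\<close>
  then show ?thesis
    unfolding \<open>nu = r^2\<close>
    by (simp only: divide_inverse inverse_mult_distrib power_inverse[symmetric]) algebra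
qed

theorem theorem4:
  fixes nu eps lam :: real and U :: "real \<times> real \<Rightarrow> real"
  assumes "nu > 0" and "eps = 0 \<or> eps = 1" and "lam \<noteq> 0"
    and "smooth2 U" and "solves_E nu eps U"
  shows "compatible_system (fhat nu eps lam U) (ghat nu eps lam U)"
proof -
  have nu: "nu \<noteq> 0" "sqrt nu \<noteq> 0" "nu = (sqrt nu)^2"
    using \<open>nu > 0\<close> by simp_all
  have powr: "nu powr (3/2) = nu * sqrt nu" "nu powr (5/2) = nu^2 * sqrt nu"
    "nu powr (7/2) = nu^3 * sqrt nu"
    using powr_nat_add_half[OF \<open>nu > 0\<close>, of 1] powr_nat_add_half[OF \<open>nu > 0\<close>, of 2]
      powr_nat_add_half[OF \<open>nu > 0\<close>, of 3]
    by simp_all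
  have E: "- 2 * nu^2 * pX U (x, t) * pX (pX U) (x, t) + 3 * eps * pX U (x, t) * U (x, t)
    - nu^2 * pX (pX (pX U)) (x, t) * U (x, t) + 2/3 * pX (pX (pX U)) (x, t)
    - 2/3 * (nu^2 * sqrt nu) * pX (pX (pX U)) (x, t) + eps * pT U (x, t)
    - nu^2 * pT (pX (pX U)) (x, t) = 0" for x t
    using \<open>solves_E nu eps U\<close> unfolding solves_E_def powr by blast
  show ?thesis
    unfolding compatible_system_def
      deriv_fhat_T[OF \<open>smooth2 U\<close> nu(1)] deriv_fhat_gamma[OF \<open>lam \<noteq> 0\<close>]
      deriv_ghat_X[OF \<open>smooth2 U\<close> nu(1) \<open>lam \<noteq> 0\<close>] deriv_ghat_gamma[OF nu(1) \<open>lam \<noteq> 0\<close>]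
    unfolding fhat_def ghat_def powr
    by (intro allI, rule eq_iff_diff_eq_0[THEN iffD2],
        subst compatibility_defect_eq[OF nu(2,3) \<open>lam \<noteq> 0\<close>])
      (simp only: E minus_zero div_0)
qed

end
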